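(* Let $n\ge2$ be an integer and $\alpha\in\mathbb{R}$. Let $x_1,\dots,x_n\in\mathbb{R}$ be pairwise distinct and non-zero with $1+x_jx_k>0$ for all $j,k$. Let $A := (1+x_jx_k)_{j,k=1}^n$ and $B := \mathbf{1}_{n\times n}$ (the all-ones matrix). Then \[ (\lambda A + (1-\lambda)B)^{\circ\alpha} \leq \lambda A^{\circ\alpha} + (1-\lambda)B^{\circ\alpha} \quad\text{for all } \lambda\in[0,1] \] (in the Loewner order) if and only if $\alpha\in\mathbb{Z}^{\ge0}\cup[n,\infty)$.
   Context: For a matrix $M$ with positive entries, $M^{\circ\alpha}$ denotes the entrywise power $(m_{jk}^\alpha)$. The Loewner order on real symmetric $n\times n$ matrices: $M\le N$ iff $N-M$ is positive semidefinite. *)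

theory Defs
  imports "HOL-Analysis.Analysis"
begin

definition entrywise_powr :: "real^'n^'m \<Rightarrow> real \<Rightarrow> real^'n^'m" where
  "entrywise_powr M a = (\<chi> j k. (M $ j $ k) powr a)"

definition psd :: "real^'n^'n \<Rightarrow> bool" where
  "psd M \<longleftrightarrow> (\<forall>v. 0 \<le> v \<bullet> (M *v v))"

definition loewner_le :: "real^'n^'n \<Rightarrow> real^'n^'n \<Rightarrow> bool" where
  "loewner_le M N \<longleftrightarrow> psd (N - M)"

end

theory Submission
  imports Defs
begin

text \<open>For \<open>0 \<le> t \<le> 1\<close> the matrix \<open>t A\<^sup>\<circ>\<^sup>\<alpha> + (1 - t) B\<^sup>\<circ>\<^sup>\<alpha> - (t A + (1 - t) B)\<^sup>\<circ>\<^sup>\<alpha>\<close> has entries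
  \<open>g(x\<^sub>j x\<^sub>k)\<close> with \<open>g(u) = t (1 + u)\<^sup>\<alpha> + 1 - t - (1 + t u)\<^sup>\<alpha>\<close>.

  If \<open>\<alpha> = m\<close> is a natural number, the binomial theorem writes \<open>g\<close> as a polynomial with nonnegative
  coefficients, so the matrix is a nonnegative combination of the rank-one matrices
  \<open>x\<^sup>\<circ>\<^sup>i (x\<^sup>\<circ>\<^sup>i)\<^sup>T\<close>. If \<open>\<alpha> \<ge> n\<close>, the function \<open>s \<mapsto> v\<^sup>T (1 + s x x\<^sup>T)\<^sup>\<circ>\<^sup>\<alpha> v\<close> is convex on \<open>[0, 1]\<close>,
  because its second derivative involves \<open>(1 + s x x\<^sup>T)\<^sup>\<circ>\<^sup>(\<^sup>\<alpha>\<^sup>-\<^sup>2\<^sup>)\<close>, which is positive semidefinite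
  by the FitzGerald--Horn theorem.

  Conversely, let \<open>\<alpha> \<notin> \<nat>\<close> and \<open>\<alpha> < n\<close>. Dividing by \<open>t\<close> and letting \<open>t \<rightarrow> 0\<close>, it suffices that the
  Taylor remainder matrix \<open>R\<^sub>1\<close> is not positive semidefinite, where
  \<open>R\<^sub>s = ((1 + s x\<^sub>j x\<^sub>k)\<^sup>\<alpha> - 1 - \<alpha> s x\<^sub>j x\<^sub>k)\<close>. For small \<open>s\<close> a Taylor expansion against a vector
  orthogonal to \<open>x\<^sup>\<circ>\<^sup>2, \<dots>, x\<^sup>\<circ>\<^sup>(\<^sup>m\<^sup>-\<^sup>1\<^sup>)\<close> shows that \<open>R\<^sub>s\<close> is not positive semidefinite, and every \<open>R\<^sub>s\<close> is
  nonsingular by a Rolle-type count of the zeros of \<open>\<Sum>\<^sub>k c\<^sub>k (1 + y\<^sub>k t)\<^sup>\<beta>\<close>, \<open>\<beta> \<notin> \<nat>\<close>. By continuity of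
  the least eigenvalue, no \<open>R\<^sub>s\<close> with \<open>0 < s \<le> 1\<close> is positive semidefinite.\<close>

subsection \<open>Quadratic forms of matrices indexed by a finite set\<close>

text \<open>A matrix is a function \<open>'a \<Rightarrow> 'a \<Rightarrow> real\<close> restricted to an index set \<open>I\<close>, so that the
  Schur product and FitzGerald--Horn theorems can be proved by induction over \<open>I\<close>.\<close>

definition quad_form :: "'a set \<Rightarrow> ('a \<Rightarrow> 'a \<Rightarrow> real) \<Rightarrow> ('a \<Rightarrow> real) \<Rightarrow> real" where
  "quad_form I M v = (\<Sum>j\<in>I. \<Sum>k\<in>I. v j * M j k * v k)"

definition bilin_form :: "'a set \<Rightarrow> ('a \<Rightarrow> 'a \<Rightarrow> real) \<Rightarrow> ('a \<Rightarrow> real) \<Rightarrow> ('a \<Rightarrow> real) \<Rightarrow> real" where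
  "bilin_form I M v w = (\<Sum>j\<in>I. \<Sum>k\<in>I. v j * M j k * w k)"

definition psd_on :: "'a set \<Rightarrow> ('a \<Rightarrow> 'a \<Rightarrow> real) \<Rightarrow> bool" where
  "psd_on I M \<longleftrightarrow> (\<forall>v. 0 \<le> quad_form I M v)"

definition symmetric_on :: "'a set \<Rightarrow> ('a \<Rightarrow> 'a \<Rightarrow> real) \<Rightarrow> bool" where
  "symmetric_on I M \<longleftrightarrow> (\<forall>j\<in>I. \<forall>k\<in>I. M j k = M k j)"

definition kronecker :: "'a \<Rightarrow> 'a \<Rightarrow> real" where
  "kronecker p j = (if j = p then 1 else 0)"

lemma symmetric_onD: "symmetric_on I M \<Longrightarrow> j \<in> I \<Longrightarrow> k \<in> I \<Longrightarrow> M j k = M k j"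
  unfolding symmetric_on_def by blast

lemma quad_form_add: "quad_form I (\<lambda>j k. M j k + N j k) v = quad_form I M v + quad_form I N v"
  by (simp add: quad_form_def algebra_simps sum.distrib)

lemma quad_form_diff: "quad_form I (\<lambda>j k. M j k - N j k) v = quad_form I M v - quad_form I N v"
  by (simp add: quad_form_def algebra_simps sum_subtractf)

lemma quad_form_cmult: "quad_form I (\<lambda>j k. c * M j k) v = c * quad_form I M v"
  by (simp add: quad_form_def sum_distrib_left algebra_simps)

lemma quad_form_sum:
  "finite S \<Longrightarrow> quad_form I (\<lambda>j k. \<Sum>m\<in>S. f m j k) v = (\<Sum>m\<in>S. quad_form I (f m) v)"
  by (induction S rule: finite_induct) (simp_all add: quad_form_add, simp add: quad_form_def)

lemma quad_form_scale_vector: "quad_form I M (\<lambda>j. c * v j) = c\<^sup>2 * quad_form I M v"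
  by (simp add: quad_form_def sum_distrib_left algebra_simps power2_eq_square)

lemma quad_form_rank_one: "quad_form I (\<lambda>j k. z j * z k) v = (\<Sum>j\<in>I. v j * z j)\<^sup>2"
  by (simp add: quad_form_def power2_eq_square sum_product algebra_simps)

lemma quad_form_hadamard_rank_one:
  "quad_form I (\<lambda>j k. M j k * (z j * z k)) v = quad_form I M (\<lambda>j. v j * z j)"
  by (simp add: quad_form_def algebra_simps)

lemma quad_form_add_vector:
  "quad_form I A (\<lambda>j. v j + w j) = quad_form I A v + bilin_form I A v w + bilin_form I A w v + quad_form I A w"
  by (simp add: quad_form_def bilin_form_def algebra_simps sum.distrib)

lemma bilin_form_cmult_left: "bilin_form I A (\<lambda>j. d * w j) v = d * bilin_form I A w v"
  by (simp add: bilin_form_def sum_distrib_left algebra_simps)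

lemma bilin_form_cmult_right: "bilin_form I A v (\<lambda>j. d * w j) = d * bilin_form I A v w"
  by (simp add: bilin_form_def sum_distrib_left algebra_simps)

lemma bilin_form_kronecker_left:
  assumes "finite I" "p \<in> I"
  shows "bilin_form I A (kronecker p) v = (\<Sum>k\<in>I. A p k * v k)"
proof -
  have "bilin_form I A (kronecker p) v = (\<Sum>j\<in>I. if j = p then (\<Sum>k\<in>I. A p k * v k) else 0)"
    unfolding bilin_form_def by (intro sum.cong) (auto simp: kronecker_def)
  thus ?thesis using assms by simp
qed

lemma bilin_form_kronecker_right:
  assumes "finite I" "p \<in> I"
  shows "bilin_form I A v (kronecker p) = (\<Sum>j\<in>I. v j * A j p)"
  using assms
  by (simp add: bilin_form_def kronecker_def if_distrib[of "\<lambda>x. _ * x"] sum.delta' cong: if_cong)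

lemma quad_form_kronecker:
  assumes "finite I" "p \<in> I"
  shows "quad_form I A (kronecker p) = A p p"
  using bilin_form_kronecker_left[OF assms, of A "kronecker p"] assms
  by (simp add: quad_form_def bilin_form_def kronecker_def if_distrib[of "\<lambda>x. _ * x"] sum.delta'
      cong: if_cong)

lemma quad_form_add_kronecker:
  assumes "finite I" "p \<in> I" "symmetric_on I A"
  shows "quad_form I A (\<lambda>j. v j + d * kronecker p j)
         = quad_form I A v + 2 * d * (\<Sum>j\<in>I. v j * A j p) + d\<^sup>2 * A p p"
proof -
  have "(\<Sum>k\<in>I. A p k * v k) = (\<Sum>j\<in>I. v j * A j p)"
    using assms by (intro sum.cong) (auto simp: symmetric_on_def mult.commute)
  with assms show ?thesis
    by (simp add: quad_form_add_vector bilin_form_cmult_left bilin_form_cmult_right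
        bilin_form_kronecker_left bilin_form_kronecker_right quad_form_scale_vector quad_form_kronecker)
qed

lemma quad_form_insert_zero:
  assumes "p \<notin> I" "\<And>k. k \<in> insert p I \<Longrightarrow> M p k = 0" "\<And>j. j \<in> insert p I \<Longrightarrow> M j p = 0"
  shows "quad_form (insert p I) M v = quad_form I M v"
proof (cases "finite I")
  case True
  with assms show ?thesis by (simp add: quad_form_def)
qed (simp add: quad_form_def)

lemma quad_form_cong:
  "(\<And>j k. j \<in> I \<Longrightarrow> k \<in> I \<Longrightarrow> M j k = N j k) \<Longrightarrow> quad_form I M v = quad_form I N v"
  unfolding quad_form_def by (intro sum.cong) auto

lemma psd_on_add: "psd_on I M \<Longrightarrow> psd_on I N \<Longrightarrow> psd_on I (\<lambda>j k. M j k + N j k)"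
  unfolding psd_on_def quad_form_add by (simp add: add_nonneg_nonneg)

lemma psd_on_cmult: "0 \<le> c \<Longrightarrow> psd_on I M \<Longrightarrow> psd_on I (\<lambda>j k. c * M j k)"
  unfolding psd_on_def quad_form_cmult by simp

lemma psd_on_rank_one: "psd_on I (\<lambda>j k. z j * z k)"
  unfolding psd_on_def quad_form_rank_one by simp

lemma psd_on_cong:
  "(\<And>j k. j \<in> I \<Longrightarrow> k \<in> I \<Longrightarrow> M j k = N j k) \<Longrightarrow> psd_on I M \<longleftrightarrow> psd_on I N"
  unfolding psd_on_def using quad_form_cong[of I M N] by metis

lemma psd_on_powr_rank_one:
  assumes "\<And>j. j \<in> I \<Longrightarrow> 0 < u j" "0 < c"
  shows "psd_on I (\<lambda>j k. (c * (u j * u k)) powr \<beta>)"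
proof -
  have "psd_on I (\<lambda>j k. c powr \<beta> * (u j powr \<beta> * u k powr \<beta>))"
    by (intro psd_on_cmult psd_on_rank_one) simp
  thus ?thesis using assms by (subst psd_on_cong) (auto simp: powr_mult)
qed

lemma psd_on_insert_zero:
  assumes "p \<notin> I" "psd_on I M"
    and "\<And>k. k \<in> insert p I \<Longrightarrow> M p k = 0" "\<And>k. k \<in> insert p I \<Longrightarrow> M k p = 0"
  shows "psd_on (insert p I) M"
  using assms unfolding psd_on_def by (subst quad_form_insert_zero) auto

lemma psd_on_remove:
  assumes "p \<notin> I" "psd_on (insert p I) M"
  shows "psd_on I M"
  unfolding psd_on_def
proof
  fix v :: "'a \<Rightarrow> real"
  define w where "w j = (if j \<in> I then v j else 0)" for j
  have "quad_form (insert p I) M w = quad_form I M w"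
    using assms(1) by (cases "finite I") (simp_all add: quad_form_def w_def)
  also have "\<dots> = quad_form I M v"
    unfolding quad_form_def w_def by (intro sum.cong) auto
  finally show "0 \<le> quad_form I M v"
    using assms(2) unfolding psd_on_def by metis
qed

lemma psd_on_diag_nonneg: "psd_on I M \<Longrightarrow> finite I \<Longrightarrow> p \<in> I \<Longrightarrow> 0 \<le> M p p"
  using quad_form_kronecker[of I p M] unfolding psd_on_def by metis

lemma psd_on_zero_diag_imp_zero:
  assumes "psd_on I A" "symmetric_on I A" "finite I" "p \<in> I" "j \<in> I" "A p p = 0"
  shows "A j p = 0"
proof (rule ccontr)
  assume ne: "A j p \<noteq> 0"
  define d where "d = - (A j j + 1) / (2 * A j p)"
  have "0 \<le> quad_form I A (\<lambda>i. kronecker j i + d * kronecker p i)"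
    using assms unfolding psd_on_def by blast
  also have "\<dots> = A j j + 2 * d * (\<Sum>i\<in>I. kronecker j i * A i p)"
    using assms by (simp add: quad_form_add_kronecker quad_form_kronecker)
  also have "(\<Sum>i\<in>I. kronecker j i * A i p) = A j p"
    using assms by (simp add: kronecker_def if_distrib[of "\<lambda>x. x * _"] sum.delta cong: if_cong)
  also have "A j j + 2 * d * A j p = -1"
    using ne by (simp add: d_def field_simps)
  finally show False by simp
qed

lemma psd_on_schur_complement:
  assumes "psd_on I A" "symmetric_on I A" "finite I" "p \<in> I"
  shows "psd_on I (\<lambda>j k. A j k - A j p * A p k / A p p)"
proof (cases "A p p = 0")
  case True
  thus ?thesis using assms by simp
next
  case False
  have a: "A p p > 0" using psd_on_diag_nonneg[OF assms(1,3,4)] False by simp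
  show ?thesis unfolding psd_on_def
  proof
    fix v
    define c where "c = (\<Sum>j\<in>I. v j * A j p)"
    have "quad_form I (\<lambda>j k. A j p * A p k) v = (\<Sum>j\<in>I. v j * A j p) * (\<Sum>k\<in>I. A p k * v k)"
      unfolding quad_form_def sum_product by (simp add: algebra_simps)
    also have "(\<Sum>k\<in>I. A p k * v k) = c"
      unfolding c_def using assms by (intro sum.cong) (auto simp: symmetric_on_def mult.commute)
    finally have rank_one: "quad_form I (\<lambda>j k. A j p * A p k) v = c * c"
      by (simp add: c_def)
    have "quad_form I (\<lambda>j k. A j k - A j p * A p k / A p p) v
        = quad_form I A v - quad_form I (\<lambda>j k. (1 / A p p) * (A j p * A p k)) v"
      by (subst quad_form_diff[symmetric]) simp
    also have "\<dots> = quad_form I A v - c * c / A p p"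
      unfolding quad_form_cmult rank_one by simp
    also have "\<dots> = quad_form I A (\<lambda>j. v j + (- c / A p p) * kronecker p j)"
      using a by (subst quad_form_add_kronecker[OF assms(3,4,2)])
        (simp add: c_def[symmetric] power2_eq_square field_simps)
    finally show "0 \<le> quad_form I (\<lambda>j k. A j k - A j p * A p k / A p p) v"
      using assms(1) unfolding psd_on_def by simp
  qed
qed

lemma symmetric_on_schur_complement:
  assumes "symmetric_on I Q" "p \<in> I" "J \<subseteq> I"
  shows "symmetric_on J (\<lambda>j k. Q j k - Q j p * Q p k / c)"
  unfolding symmetric_on_def
proof (intro ballI)
  fix j k assume "j \<in> J" "k \<in> J"
  hence "Q j k = Q k j" "Q j p = Q p j" "Q p k = Q k p"
    using symmetric_onD[OF assms(1)] assms(2,3) by blast+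
  thus "Q j k - Q j p * Q p k / c = Q k j - Q k p * Q p j / c" by (simp add: mult.commute)
qed

text \<open>Splitting off the rank-one part \<open>Q\<^sub>\<cdot>\<^sub>p Q\<^sub>p\<^sub>\<cdot> / Q\<^sub>p\<^sub>p\<close> of \<open>Q\<close> leaves a Schur complement
  that vanishes on row and column \<open>p\<close>, to which the induction hypothesis applies.\<close>

lemma psd_on_hadamard:
  assumes "finite I" "psd_on I P" "psd_on I Q" "symmetric_on I Q"
  shows "psd_on I (\<lambda>j k. P j k * Q j k)"
  using assms
proof (induction I arbitrary: Q rule: finite_induct)
  case empty
  then show ?case by (simp add: psd_on_def quad_form_def)
next
  case (insert p I)
  let ?I = "insert p I"
  define Q' where "Q' j k = Q j k - Q j p * Q p k / Q p p" for j k
  have Q'_psd: "psd_on ?I Q'"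
    unfolding Q'_def using insert by (intro psd_on_schur_complement) auto
  have Q'_sym: "symmetric_on I Q'"
    unfolding Q'_def using insert.prems(3) by (rule symmetric_on_schur_complement) auto
  have Q_col: "Q p p = 0 \<Longrightarrow> Q j p = 0" if "j \<in> ?I" for j
    using psd_on_zero_diag_imp_zero[OF insert.prems(2,3)] insert that by auto
  have Q_sym: "Q j k = Q k j" if "j \<in> ?I" "k \<in> ?I" for j k
    using symmetric_onD[OF insert.prems(3) that] .
  have Q'_zero: "Q' p k = 0" "Q' k p = 0" if "k \<in> ?I" for k
    using Q_col[OF that] Q_sym[OF that] unfolding Q'_def by (auto simp: Q_sym that)
  have "psd_on I (\<lambda>j k. P j k * Q' j k)"
    using insert.IH psd_on_remove[OF insert(2)] insert.prems Q'_psd Q'_sym by blast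
  hence psd_Q': "psd_on ?I (\<lambda>j k. P j k * Q' j k)"
    using insert(2) Q'_zero by (intro psd_on_insert_zero) auto
  have "psd_on ?I (\<lambda>j k. P j k * (Q j p * Q k p))"
    using insert.prems(1) unfolding psd_on_def quad_form_hadamard_rank_one by simp
  hence psd_rank_one: "psd_on ?I (\<lambda>j k. P j k * (Q j p * Q p k))"
    using Q_sym by (subst psd_on_cong) auto
  have "(\<lambda>j k. P j k * Q j k)
      = (\<lambda>j k. P j k * Q' j k + (1 / Q p p) * (P j k * (Q j p * Q p k)))"
    unfolding Q'_def by (auto simp: algebra_simps fun_eq_iff)
  then show ?case
    using psd_on_diag_nonneg[OF insert.prems(2)] insert(1)
    by (simp only:) (intro psd_on_add psd_on_cmult psd_Q' psd_rank_one, auto)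
qed

lemma quadratic_nonneg_imp_linear_coeff_zero:
  fixes a c :: real
  assumes "\<And>d. 0 \<le> 2 * d * c + d\<^sup>2 * a"
  shows "c = 0"
proof (rule ccontr)
  assume "c \<noteq> 0"
  define d where "d = - c / (\<bar>a\<bar> + 1)"
  have "d\<^sup>2 * a \<le> d\<^sup>2 * (\<bar>a\<bar> + 1)" by (intro mult_left_mono) auto
  also have "\<dots> = d * (d * (\<bar>a\<bar> + 1))" by (simp add: power2_eq_square)
  also have "d * (\<bar>a\<bar> + 1) = - c"
    unfolding d_def using abs_ge_zero[of a] by (simp add: field_simps)
  finally have "2 * d * c + d\<^sup>2 * a \<le> d * c" by linarith
  moreover have "0 < c * c / (\<bar>a\<bar> + 1)"
    using \<open>c \<noteq> 0\<close> by (intro divide_pos_pos) (auto simp: zero_less_mult_iff)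
  hence "d * c < 0" unfolding d_def by simp
  ultimately show False using assms[of d] by (simp add: mult.commute)
qed

lemma psd_on_kernel:
  assumes "finite I" "psd_on I M" "symmetric_on I M" "quad_form I M v = 0" "j \<in> I"
  shows "(\<Sum>k\<in>I. M j k * v k) = 0"
proof -
  have "0 \<le> 2 * d * (\<Sum>k\<in>I. v k * M k j) + d\<^sup>2 * M j j" for d
  proof -
    have "0 \<le> quad_form I M (\<lambda>i. v i + d * kronecker j i)"
      using assms(2) unfolding psd_on_def by blast
    thus ?thesis using assms(4) quad_form_add_kronecker[OF assms(1,5,3), of v d] by simp
  qed
  hence "(\<Sum>k\<in>I. v k * M k j) = 0" by (rule quadratic_nonneg_imp_linear_coeff_zero)
  moreover have "(\<Sum>k\<in>I. M j k * v k) = (\<Sum>k\<in>I. v k * M k j)"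
    using symmetric_onD[OF assms(3,5)] by (intro sum.cong) auto
  ultimately show ?thesis by simp
qed

subsection \<open>The FitzGerald--Horn theorem\<close>

lemma has_real_derivative_affine_powr:
  fixes a b s r :: real
  assumes "0 < a + b * s"
  shows "((\<lambda>s. (a + b * s) powr r) has_real_derivative r * (a + b * s) powr (r - 1) * b) (at s)"
  using DERIV_fun_powr[of "\<lambda>s. a + b * s" b s r] assms by (auto intro!: derivative_eq_intros)

lemma has_real_derivative_quad_form_powr:
  assumes "\<And>j k. j \<in> I \<Longrightarrow> k \<in> I \<Longrightarrow> 0 < R j k + Q j k * s"
  shows "((\<lambda>s. quad_form I (\<lambda>j k. (R j k + Q j k * s) powr r) v) has_real_derivative
           quad_form I (\<lambda>j k. r * (R j k + Q j k * s) powr (r - 1) * Q j k) v) (at s)"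
  unfolding quad_form_def using assms
  by (intro DERIV_sum DERIV_cmult DERIV_cmult_right has_real_derivative_affine_powr) auto

lemma psd_on_powr_along_path:
  assumes pos: "\<And>s j k. 0 \<le> s \<Longrightarrow> s \<le> 1 \<Longrightarrow> j \<in> I \<Longrightarrow> k \<in> I \<Longrightarrow> 0 < R j k + Q j k * s"
    and psd: "\<And>s. 0 \<le> s \<Longrightarrow> s \<le> 1 \<Longrightarrow>
                psd_on I (\<lambda>j k. r * (R j k + Q j k * s) powr (r - 1) * Q j k)"
    and "psd_on I (\<lambda>j k. R j k powr r)"
  shows "psd_on I (\<lambda>j k. (R j k + Q j k) powr r)"
  unfolding psd_on_def
proof
  fix v
  define \<psi> where "\<psi> s = quad_form I (\<lambda>j k. (R j k + Q j k * s) powr r) v" for s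
  have "\<psi> 0 \<le> \<psi> 1"
  proof (rule DERIV_nonneg_imp_nondecreasing[of 0 1 \<psi>])
    fix s :: real assume s: "0 \<le> s" "s \<le> 1"
    show "\<exists>y. DERIV \<psi> s :> y \<and> 0 \<le> y"
      using has_real_derivative_quad_form_powr[of I R Q s r v] pos[OF s] psd[OF s]
      unfolding \<psi>_def psd_on_def by auto
  qed simp
  moreover have "0 \<le> \<psi> 0" using assms(3) unfolding \<psi>_def psd_on_def by simp
  ultimately show "0 \<le> quad_form I (\<lambda>j k. (R j k + Q j k) powr r) v"
    unfolding \<psi>_def by simp
qed

text \<open>Induction on the size of \<open>I\<close>: \<open>A\<close> is joined to its rank-one part \<open>R\<close> by the path
  \<open>R + s Q\<close>, \<open>Q\<close> the Schur complement of the entry \<open>A\<^sub>p\<^sub>p\<close>, and along this path the derivative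
  \<open>\<beta> (R + s Q)\<^sup>\<circ>\<^sup>(\<^sup>\<beta>\<^sup>-\<^sup>1\<^sup>) \<circ> Q\<close> is positive semidefinite by the induction hypothesis and
  the Schur product theorem.\<close>

lemma psd_on_entrywise_powr:
  assumes "finite I" "psd_on I A" "symmetric_on I A" "\<forall>j\<in>I. \<forall>k\<in>I. 0 < A j k"
    and "real (card I) - 2 \<le> \<beta>"
  shows "psd_on I (\<lambda>j k. A j k powr \<beta>)"
  using assms
proof (induction I arbitrary: A \<beta> rule: finite_induct)
  case empty
  then show ?case by (simp add: psd_on_def quad_form_def)
next
  case (insert p I)
  let ?I = "insert p I"
  have A_pos: "0 < A j k" if "j \<in> ?I" "k \<in> ?I" for j k
    using insert.prems(3) that by blast
  have A_sym: "A j k = A k j" if "j \<in> ?I" "k \<in> ?I" for j k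
    using symmetric_onD[OF insert.prems(2) that] .
  have a: "0 < A p p" using A_pos by simp
  define R where "R j k = (1 / A p p) * (A j p * A k p)" for j k
  define Q where "Q j k = A j k - A j p * A p k / A p p" for j k
  have R_psd: "psd_on J R" for J
    unfolding R_def using a by (intro psd_on_cmult psd_on_rank_one) simp
  have R_powr_psd: "psd_on ?I (\<lambda>j k. R j k powr \<beta>)"
    unfolding R_def using A_pos a by (intro psd_on_powr_rank_one) auto
  have Q_psd: "psd_on ?I Q"
    unfolding Q_def using insert by (intro psd_on_schur_complement) auto
  have Q_zero: "Q p k = 0" "Q k p = 0" for k
    unfolding Q_def using a by auto
  have path: "R j k + Q j k * s = (1 - s) * R j k + s * A j k" if "j \<in> ?I" "k \<in> ?I" for j k s
    unfolding R_def Q_def using A_sym[of p k] that a by (simp add: field_simps)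
  have path_pos: "0 < R j k + Q j k * s" if "0 \<le> s" "s \<le> 1" "j \<in> ?I" "k \<in> ?I" for s j k
  proof -
    have "0 < R j k" unfolding R_def using A_pos that a by simp
    thus ?thesis unfolding path[OF that(3,4)] using A_pos[OF that(3,4)] that(1,2)
      by (cases "s = 0") (auto intro: add_nonneg_pos add_pos_nonneg)
  qed
  have deriv_psd: "psd_on ?I (\<lambda>j k. \<beta> * (R j k + Q j k * s) powr (\<beta> - 1) * Q j k)"
    if s: "0 \<le> s" "s \<le> 1" for s
  proof (cases "I = {}")
    case True
    then show ?thesis using Q_zero by (simp add: psd_on_def quad_form_def)
  next
    case False
    hence "1 \<le> card I" using insert(1) by (simp add: Suc_le_eq card_gt_0_iff)
    hence \<beta>: "0 \<le> \<beta>" "real (card I) - 2 \<le> \<beta> - 1"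
      using insert.prems(4) insert(1,2) by simp_all
    have "psd_on ?I (\<lambda>j k. R j k + s * Q j k)"
      using R_psd Q_psd s by (intro psd_on_add psd_on_cmult) auto
    hence "psd_on I (\<lambda>j k. R j k + Q j k * s)"
      using psd_on_remove[OF insert(2)] by (simp add: mult.commute)
    moreover have "symmetric_on I Q"
      unfolding Q_def using insert.prems(2) by (rule symmetric_on_schur_complement) auto
    moreover have "symmetric_on I R"
      unfolding R_def symmetric_on_def by (simp add: mult.commute)
    ultimately have "psd_on I (\<lambda>j k. (R j k + Q j k * s) powr (\<beta> - 1))"
      using insert.IH path_pos[OF s] \<beta>(2) by (simp add: symmetric_on_def)
    hence "psd_on I (\<lambda>j k. \<beta> * ((R j k + Q j k * s) powr (\<beta> - 1) * Q j k))"
      using psd_on_remove[OF insert(2) Q_psd] \<open>symmetric_on I Q\<close> insert(1) \<beta>(1)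
      by (intro psd_on_cmult psd_on_hadamard) auto
    thus ?thesis using insert(2) Q_zero by (intro psd_on_insert_zero) (auto simp: mult.assoc)
  qed
  have "psd_on ?I (\<lambda>j k. (R j k + Q j k) powr \<beta>)"
    using path_pos deriv_psd R_powr_psd by (rule psd_on_powr_along_path)
  thus ?case using path[where s = 1] by (subst (asm) psd_on_cong) auto
qed

subsection \<open>Zeros of sums of powers of affine functions\<close>

lemma convex_real_betweenD:
  fixes I :: "real set"
  assumes "convex I" "a \<in> I" "b \<in> I" "a \<le> z" "z \<le> b"
  shows "z \<in> I"
  using assms unfolding is_interval_convex_1[symmetric] is_interval_1 by blast

lemma rolle_finite_zeros_between:
  fixes f f' :: "real \<Rightarrow> real"
  assumes I: "convex I" and d: "\<And>t. t \<in> I \<Longrightarrow> (f has_real_derivative f' t) (at t)"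
    and Z: "finite Z" "Z \<subseteq> I" "\<And>z. z \<in> Z \<Longrightarrow> f z = 0"
  shows "\<exists>Z'. finite Z' \<and> card Z \<le> card Z' + 1 \<and> Z' \<inter> Z = {} \<and>
           (\<forall>z\<in>Z'. f' z = 0 \<and> (\<exists>a\<in>Z. a < z) \<and> (\<exists>b\<in>Z. z < b))"
  using Z
proof (induction Z rule: finite_linorder_max_induct)
  case empty
  then show ?case by auto
next
  case (insert b A)
  from insert.IH insert.prems obtain A' where A': "finite A'" "card A \<le> card A' + 1" "A' \<inter> A = {}"
    "\<forall>z\<in>A'. f' z = 0 \<and> (\<exists>a\<in>A. a < z) \<and> (\<exists>b\<in>A. z < b)" by auto
  show ?case
  proof (cases "A = {}")
    case True
    then show ?thesis by (intro exI[of _ "{}"]) auto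
  next
    case False
    define m where "m = Max A"
    have mA: "m \<in> A" and Am: "\<forall>a\<in>A. a \<le> m"
      using False insert(1) by (auto simp: m_def)
    have mb: "m < b" using mA insert(2) by auto
    have seg: "t \<in> I" if "m \<le> t" "t \<le> b" for t
      using convex_real_betweenD[OF I _ _ that] mA insert.prems(1) by auto
    have "\<exists>r. m < r \<and> r < b \<and> DERIV f r :> 0"
    proof (rule Rolle)
      show "f m = f b" using insert.prems(2) mA by auto
      show "continuous_on {m..b} f"
        using d seg by (intro continuous_at_imp_continuous_on ballI) (auto intro: DERIV_isCont)
      show "f differentiable at x" if "m < x" "x < b" for x
        using d seg that by (meson less_imp_le real_differentiable_def)
    qed (fact mb)
    then obtain r where r: "m < r" "r < b" "DERIV f r :> 0" by auto
    have "f' r = 0" using d[of r] seg r DERIV_unique by force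
    moreover have "r \<notin> A'" "b \<notin> A'" using A'(4) Am r(1) insert(2) by force+
    moreover have "r \<notin> insert b A" using Am r by force
    ultimately show ?thesis
      using A' insert(1,2) r mA by (intro exI[of _ "insert r A'"]) auto
  qed
qed

lemma rolle_finite_zeros:
  fixes f f' :: "real \<Rightarrow> real"
  assumes I: "convex I" and d: "\<And>t. t \<in> I \<Longrightarrow> (f has_real_derivative f' t) (at t)"
    and Z: "finite Z" "Z \<subseteq> I" "\<And>z. z \<in> Z \<Longrightarrow> f z = 0"
  shows "\<exists>Z'. finite Z' \<and> Z' \<subseteq> I \<and> card Z \<le> card Z' + 1 \<and> Z' \<inter> Z = {} \<and> (\<forall>z\<in>Z'. f' z = 0)"
proof -
  obtain Z' where Z': "finite Z'" "card Z \<le> card Z' + 1" "Z' \<inter> Z = {}"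
      "\<forall>z\<in>Z'. f' z = 0 \<and> (\<exists>a\<in>Z. a < z) \<and> (\<exists>b\<in>Z. z < b)"
    using rolle_finite_zeros_between[OF assms] by blast
  have "Z' \<subseteq> I"
    using Z'(4) Z(2) convex_real_betweenD[OF I] by (meson less_imp_le subsetD subsetI)
  with Z' show ?thesis by blast
qed

lemma sum_powers_zero_imp_coeffs_zero:
  fixes a :: "nat \<Rightarrow> real"
  assumes "finite Z" "r \<le> card Z" "\<And>z. z \<in> Z \<Longrightarrow> (\<Sum>i<r. a i * z ^ i) = 0"
  shows "\<forall>i<r. a i = 0"
  using assms
proof (induction r arbitrary: a Z)
  case 0
  then show ?case by simp
next
  case (Suc r)
  define g where "g t = (\<Sum>i<Suc r. a i * t ^ i)" for t
  define g' where "g' t = (\<Sum>i<r. (real (Suc i) * a (Suc i)) * t ^ i)" for t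
  have dg: "(g has_real_derivative g' t) (at t)" for t
  proof -
    have "(g has_real_derivative (\<Sum>i<Suc r. a i * (real i * t ^ (i - 1)))) (at t)"
      unfolding g_def by (intro DERIV_sum DERIV_cmult) (auto intro!: derivative_eq_intros)
    moreover have "(\<Sum>i<Suc r. a i * (real i * t ^ (i - 1))) = g' t"
      unfolding g'_def by (subst sum.lessThan_Suc_shift) (simp add: algebra_simps)
    ultimately show ?thesis by simp
  qed
  obtain Z' where Z': "finite Z'" "card Z \<le> card Z' + 1" "\<forall>z\<in>Z'. g' z = 0"
    using rolle_finite_zeros[of UNIV g g' Z] dg Suc.prems unfolding g_def by auto
  have "\<forall>i<r. real (Suc i) * a (Suc i) = 0"
    by (rule Suc.IH[of Z']) (use Z' Suc.prems g'_def in auto)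
  hence hi: "\<forall>i<r. a (Suc i) = 0" by simp
  obtain z where "z \<in> Z" using Suc.prems(2) by (metis Suc_le_D card.empty equals0I nat.distinct(1))
  hence "(\<Sum>i<Suc r. a i * z ^ i) = 0" using Suc.prems by auto
  moreover have "(\<Sum>i<Suc r. a i * z ^ i) = a 0" using hi by (subst sum.lessThan_Suc_shift) simp
  ultimately have "a 0 = 0" by simp
  thus ?case using hi by (metis less_Suc_eq_0_disj)
qed

lemma has_real_derivative_powr_ratio:
  fixes a b \<beta> t :: real
  assumes "0 < 1 + a * t" "0 < 1 + b * t"
  shows "((\<lambda>t. (1 + a * t) powr \<beta> * (1 + b * t) powr (- \<beta>)) has_real_derivative
          \<beta> * (a - b) * (1 + a * t) powr (\<beta> - 1) * (1 + b * t) powr (- \<beta> - 1)) (at t)"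
proof -
  have "((\<lambda>t. (1 + a * t) powr \<beta> * (1 + b * t) powr (- \<beta>)) has_real_derivative
      (\<beta> * (1 + a * t) powr (\<beta> - 1) * a) * (1 + b * t) powr (- \<beta>)
      + (1 + a * t) powr \<beta> * (- \<beta> * (1 + b * t) powr (- \<beta> - 1) * b)) (at t)"
    using DERIV_mult[OF has_real_derivative_affine_powr[OF assms(1), of \<beta>]
        has_real_derivative_affine_powr[OF assms(2), of "- \<beta>"]] by (simp add: mult_ac)
  moreover have "(\<beta> * (1 + a * t) powr (\<beta> - 1) * a) * (1 + b * t) powr (- \<beta>)
      + (1 + a * t) powr \<beta> * (- \<beta> * (1 + b * t) powr (- \<beta> - 1) * b)
      = \<beta> * (a - b) * (1 + a * t) powr (\<beta> - 1) * (1 + b * t) powr (- \<beta> - 1)"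
  proof -
    have e1: "(1 + b * t) powr (- \<beta>) = (1 + b * t) powr (- \<beta> - 1) * (1 + b * t)"
      using powr_add[of "1 + b * t" "- \<beta> - 1" 1] assms(2) by simp
    have e2: "(1 + a * t) powr \<beta> = (1 + a * t) powr (\<beta> - 1) * (1 + a * t)"
      using powr_add[of "1 + a * t" "\<beta> - 1" 1] assms(1) by simp
    show ?thesis unfolding e1 e2 by (simp add: algebra_simps)
  qed
  ultimately show ?thesis by simp
qed

text \<open>After division by \<open>(1 + y\<^sub>p t)\<^sup>\<beta>\<close> the \<open>p\<close>-th term is constant; differentiating removes it,
  lowers the exponent to \<open>\<beta> - 1\<close>, and by Rolle's theorem costs at most one zero.\<close>

lemma sum_powr_zero_imp_coeffs_zero:
  fixes y d :: "'a \<Rightarrow> real"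
  assumes "finite K" "inj_on y K" "\<forall>m::nat. \<beta> \<noteq> real m" "convex I"
    "\<forall>t\<in>I. \<forall>k\<in>K. 0 < 1 + y k * t" "finite Z" "Z \<subseteq> I" "card K \<le> card Z"
    "\<forall>z\<in>Z. (\<Sum>k\<in>K. d k * (1 + y k * z) powr \<beta>) = 0"
  shows "\<forall>k\<in>K. d k = 0"
  using assms
proof (induction K arbitrary: d \<beta> Z rule: finite_induct)
  case empty
  then show ?case by simp
next
  case (insert p K)
  have pos: "0 < 1 + y k * t" if "t \<in> I" "k \<in> insert p K" for t k
    using insert.prems(4) that by blast
  define g where
    "g t = d p + (\<Sum>k\<in>K. d k * ((1 + y k * t) powr \<beta> * (1 + y p * t) powr (- \<beta>)))" for t
  define e where "e k = d k * (\<beta> * (y k - y p))" for k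
  define g' where
    "g' t = (1 + y p * t) powr (- \<beta> - 1) * (\<Sum>k\<in>K. e k * (1 + y k * t) powr (\<beta> - 1))" for t
  have g_deriv: "(g has_real_derivative g' t) (at t)" if "t \<in> I" for t
  proof -
    have "(g has_real_derivative 0 + (\<Sum>k\<in>K. d k * (\<beta> * (y k - y p) * (1 + y k * t) powr (\<beta> - 1)
            * (1 + y p * t) powr (- \<beta> - 1)))) (at t)"
      unfolding g_def using pos that
      by (intro DERIV_add DERIV_const DERIV_sum DERIV_cmult has_real_derivative_powr_ratio) auto
    thus ?thesis by (simp add: g'_def e_def sum_distrib_left algebra_simps)
  qed
  have g_zero: "g z = 0" if "z \<in> Z" for z
  proof -
    have "0 < 1 + y p * z" using pos insert.prems(6) that by auto
    hence inv: "(1 + y p * z) powr \<beta> * (1 + y p * z) powr (- \<beta>) = 1"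
      by (simp add: powr_add[symmetric])
    have "(\<Sum>k\<in>insert p K. d k * (1 + y k * z) powr \<beta>) * (1 + y p * z) powr (- \<beta>)
        = d p * ((1 + y p * z) powr \<beta> * (1 + y p * z) powr (- \<beta>))
          + (\<Sum>k\<in>K. d k * ((1 + y k * z) powr \<beta> * (1 + y p * z) powr (- \<beta>)))"
      using insert(1,2) by (simp add: sum_distrib_right sum_distrib_left algebra_simps)
    hence "g z = (\<Sum>k\<in>insert p K. d k * (1 + y k * z) powr \<beta>) * (1 + y p * z) powr (- \<beta>)"
      unfolding g_def inv by simp
    thus ?thesis using insert.prems(8) that by simp
  qed
  obtain Z' where Z': "finite Z'" "Z' \<subseteq> I" "card Z \<le> card Z' + 1" "\<forall>z\<in>Z'. g' z = 0"
    using rolle_finite_zeros[OF insert.prems(3) g_deriv insert.prems(5,6)] g_zero by blast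
  have "\<forall>k\<in>K. e k = 0"
  proof (rule insert.IH)
    show "\<forall>m::nat. \<beta> - 1 \<noteq> real m"
      using insert.prems(2) by (metis diff_eq_eq of_nat_Suc add.commute)
    show "\<forall>z\<in>Z'. (\<Sum>k\<in>K. e k * (1 + y k * z) powr (\<beta> - 1)) = 0"
      using Z'(2,4) pos by (fastforce simp: g'_def)
    show "card K \<le> card Z'" using Z'(3) insert.prems(7) insert(1,2) by simp
  qed (use insert.prems Z' in auto)
  moreover have "y k \<noteq> y p" if "k \<in> K" for k
    using insert.prems(1) insert(2) that by (auto simp: inj_on_def)
  moreover have "\<beta> \<noteq> 0" using insert.prems(2)[rule_format, of 0] by simp
  ultimately have K_zero: "\<forall>k\<in>K. d k = 0" by (simp add: e_def)
  obtain z where z: "z \<in> Z"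
    using insert.prems(7) insert(1,2) by (metis card.empty card_insert_disjoint equals0I not_less_eq_eq zero_le)
  have "0 < 1 + y p * z" using pos insert.prems(6) z by auto
  hence "d p = 0" using insert.prems(8) z K_zero insert(1,2) by force
  thus ?case using K_zero by simp
qed

lemma rolle_finite_zeros_twice:
  fixes f f' f'' :: "real \<Rightarrow> real"
  assumes I: "convex I"
    and d1: "\<And>t. t \<in> I \<Longrightarrow> (f has_real_derivative f' t) (at t)"
    and d2: "\<And>t. t \<in> I \<Longrightarrow> (f' has_real_derivative f'' t) (at t)"
    and Z: "finite Z" "Z \<subseteq> I" "\<And>z. z \<in> Z \<Longrightarrow> f z = 0" "z\<^sub>0 \<in> Z" "f' z\<^sub>0 = 0"
  shows "\<exists>Z''. finite Z'' \<and> Z'' \<subseteq> I \<and> card Z \<le> card Z'' + 1 \<and> (\<forall>z\<in>Z''. f'' z = 0)"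
proof -
  obtain Z' where Z': "finite Z'" "Z' \<subseteq> I" "card Z \<le> card Z' + 1" "Z' \<inter> Z = {}"
      "\<forall>z\<in>Z'. f' z = 0"
    using rolle_finite_zeros[OF I d1 Z(1-3)] by blast
  have "card Z \<le> card (insert z\<^sub>0 Z')" using Z' Z(4) by (subst card_insert_disjoint) auto
  moreover have "finite (insert z\<^sub>0 Z')" "insert z\<^sub>0 Z' \<subseteq> I"
    "\<And>z. z \<in> insert z\<^sub>0 Z' \<Longrightarrow> f' z = 0"
    using Z Z' by auto
  from rolle_finite_zeros[OF I d2 this] obtain Z'' where "finite Z''" "Z'' \<subseteq> I"
      "card (insert z\<^sub>0 Z') \<le> card Z'' + 1" "\<forall>z\<in>Z''. f'' z = 0"
    by blast
  ultimately show ?thesis by (intro exI[of _ Z'']) auto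
qed

subsection \<open>The Taylor remainder matrix\<close>

definition powr_remainder :: "real \<Rightarrow> real \<Rightarrow> real" where
  "powr_remainder \<alpha> u = (1 + u) powr \<alpha> - 1 - \<alpha> * u"

lemma convex_positivity_set: "convex {t::real. \<forall>k. 0 < 1 + y k * t}"
proof -
  have "\<And>a::real. 0 < 1 + a \<longleftrightarrow> -1 < a" by linarith
  hence "{t::real. \<forall>k. 0 < 1 + y k * t} = (\<Inter>k. {t. inner (y k) t > -1})" by auto
  thus ?thesis by (simp only:) (intro convex_INT convex_halfspace_gt)
qed

text \<open>Two applications of Rolle's theorem to \<open>t \<mapsto> \<Sum>\<^sub>k c\<^sub>k R(y\<^sub>k t)\<close>, which vanishes at \<open>0\<close> and at
  the \<open>n\<close> points \<open>z\<^sub>j\<close> and has vanishing derivative at \<open>0\<close>, produce \<open>n\<close> zeros of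
  \<open>\<Sum>\<^sub>k c\<^sub>k \<alpha> (\<alpha> - 1) y\<^sub>k\<^sup>2 (1 + y\<^sub>k t)\<^sup>\<alpha>\<^sup>-\<^sup>2\<close>.\<close>

lemma powr_remainder_matrix_nonsingular:
  fixes y z c :: "'n::finite \<Rightarrow> real"
  assumes y: "inj y" "\<forall>k. y k \<noteq> 0" and z: "inj z" "\<forall>j. z j \<noteq> 0"
    and pos: "\<forall>j k. 0 < 1 + y k * z j" and not_nat: "\<forall>m::nat. \<alpha> \<noteq> real m"
    and kernel: "\<forall>j. (\<Sum>k\<in>UNIV. c k * powr_remainder \<alpha> (y k * z j)) = 0"
  shows "\<forall>k. c k = 0"
proof -
  define I where "I = {t::real. \<forall>k. 0 < 1 + y k * t}"
  define \<phi> where "\<phi> t = (\<Sum>k\<in>UNIV. c k * ((1 + y k * t) powr \<alpha> - 1 - \<alpha> * (y k * t)))" for t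
  define \<phi>' where
    "\<phi>' t = (\<Sum>k\<in>UNIV. c k * (\<alpha> * (1 + y k * t) powr (\<alpha> - 1) * y k - \<alpha> * y k))" for t
  define d where "d k = c k * (\<alpha> * (\<alpha> - 1) * y k * y k)" for k
  define \<phi>'' where "\<phi>'' t = (\<Sum>k\<in>UNIV. d k * (1 + y k * t) powr (\<alpha> - 2))" for t
  have d1: "(\<phi> has_real_derivative \<phi>' t) (at t)" if "t \<in> I" for t
    unfolding \<phi>_def \<phi>'_def using that
    by (intro DERIV_sum DERIV_cmult DERIV_diff has_real_derivative_affine_powr)
      (auto simp: I_def intro!: derivative_eq_intros)
  have "(\<phi>' has_real_derivative
      (\<Sum>k\<in>UNIV. c k * (\<alpha> * ((\<alpha> - 1) * (1 + y k * t) powr (\<alpha> - 1 - 1) * y k) * y k - 0))) (at t)"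
    if "t \<in> I" for t
    unfolding \<phi>'_def using that
    by (intro DERIV_sum DERIV_cmult DERIV_diff DERIV_cmult_right DERIV_const
        has_real_derivative_affine_powr) (auto simp: I_def)
  hence d2: "(\<phi>' has_real_derivative \<phi>'' t) (at t)" if "t \<in> I" for t
    using that unfolding \<phi>''_def d_def by (simp add: algebra_simps)
  define Z where "Z = insert 0 (range z)"
  have "0 \<notin> range z" using z(2) by auto
  hence "card Z = CARD('n) + 1"
    unfolding Z_def using z(1) by (simp add: card_image)
  have "Z \<subseteq> I" "\<And>t. t \<in> Z \<Longrightarrow> \<phi> t = 0"
    using pos kernel unfolding Z_def I_def \<phi>_def powr_remainder_def by auto
  have "convex I" unfolding I_def by (rule convex_positivity_set)
  have "finite Z" "0 \<in> Z" "\<phi>' 0 = 0" unfolding Z_def \<phi>'_def by simp_all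
  from rolle_finite_zeros_twice[OF \<open>convex I\<close> d1 d2 this(1) \<open>Z \<subseteq> I\<close>
      \<open>\<And>t. t \<in> Z \<Longrightarrow> \<phi> t = 0\<close> this(2,3)]
  obtain Z'' where Z'': "finite Z''" "Z'' \<subseteq> I" "card Z \<le> card Z'' + 1" "\<forall>t\<in>Z''. \<phi>'' t = 0"
    by blast
  have "\<forall>k\<in>UNIV. d k = 0"
  proof (rule sum_powr_zero_imp_coeffs_zero[where I = I and Z = Z'' and \<beta> = "\<alpha> - 2" and y = y])
    show "\<forall>m::nat. \<alpha> - 2 \<noteq> real m"
      using not_nat[rule_format, of "_ + 2"] by (auto simp: algebra_simps)
  qed (use y Z'' \<open>convex I\<close> \<open>card Z = CARD('n) + 1\<close> in \<open>auto simp: I_def \<phi>''_def\<close>)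
  moreover have "\<alpha> \<noteq> 0" "\<alpha> \<noteq> 1"
    using not_nat[rule_format, of 0] not_nat[rule_format, of 1] by auto
  ultimately show ?thesis using y unfolding d_def by auto
qed


lemma power_not_combination_of_lower_powers:
  fixes x :: "'n::finite \<Rightarrow> real"
  assumes x: "inj x" "\<forall>j. x j \<noteq> 0" and m: "2 \<le> m" "m \<le> CARD('n) + 1"
  shows "\<not> (\<forall>j. x j ^ m = (\<Sum>i\<in>{2..<m}. c i * x j ^ i))"
proof
  assume comb: "\<forall>j. x j ^ m = (\<Sum>i\<in>{2..<m}. c i * x j ^ i)"
  define a where "a l = (if l = m - 2 then 1 else 0) - (if l + 2 < m then c (l + 2) else 0)" for l
  have "\<forall>l<m - 1. a l = 0"
  proof (rule sum_powers_zero_imp_coeffs_zero[of "range x"])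
    show "m - 1 \<le> card (range x)" using x m by (simp add: card_image)
    fix t assume "t \<in> range x"
    then obtain j where j: "t = x j" by auto
    have "m - 2 + 2 = m" using m(1) by simp
    hence "(\<Sum>i\<in>{2..<m}. c i * x j ^ i) = (\<Sum>l<m - 2. c (l + 2) * x j ^ (l + 2))"
      using sum.shift_bounds_nat_ivl[of "\<lambda>i. c i * x j ^ i" 0 2 "m - 2"]
      by (simp only: add_0 atLeast0LessThan)
    also have "\<dots> = x j ^ 2 * (\<Sum>l<m - 2. c (l + 2) * x j ^ l)"
      by (simp add: sum_distrib_left power_add power2_eq_square mult_ac)
    also have "(\<Sum>i\<in>{2..<m}. c i * x j ^ i) = x j ^ 2 * x j ^ (m - 2)"
      using comb[rule_format, of j] m(1) by (metis le_add_diff_inverse power_add)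
    finally have "x j ^ 2 * x j ^ (m - 2) = x j ^ 2 * (\<Sum>l<m - 2. c (l + 2) * x j ^ l)" .
    hence "x j ^ (m - 2) = (\<Sum>l<m - 2. c (l + 2) * x j ^ l)" using x(2) by simp
    moreover have "{..<m - 1} = insert (m - 2) {..<m - 2}" using m by auto
    moreover have "(\<Sum>l<m - 2. a l * t ^ l) = (\<Sum>l<m - 2. - (c (l + 2) * t ^ l))"
      by (intro sum.cong) (auto simp: a_def)
    ultimately show "(\<Sum>l<m - 1. a l * t ^ l) = 0" using j m by (simp add: a_def sum_negf)
  qed simp
  moreover have "a (m - 2) = 1" unfolding a_def using m by simp
  ultimately show False using m(1) by simp
qed

lemma span_image_sum:
  fixes f :: "nat \<Rightarrow> 'b::real_vector"
  assumes "y \<in> span (f ` A)" "finite A"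
  shows "\<exists>c. y = (\<Sum>i\<in>A. c i *\<^sub>R f i)"
  using assms(1)
proof (induction rule: real_vector.span_induct_alt)
  case base
  show ?case by (intro exI[of _ "\<lambda>_. 0"]) simp
next
  case (step c x y)
  then obtain i0 d where i0: "i0 \<in> A" "x = f i0" and d: "y = (\<Sum>i\<in>A. d i *\<^sub>R f i)" by auto
  show ?case
  proof (intro exI)
    show "c *\<^sub>R x + y = (\<Sum>i\<in>A. (d i + (if i = i0 then c else 0)) *\<^sub>R f i)"
      using i0 assms(2) d
      by (simp add: scaleR_add_left sum.distrib if_distrib[of "\<lambda>a. a *\<^sub>R _"] cong: if_cong)
  qed
qed

lemma exists_vector_annihilating_lower_powers:
  fixes x :: "'n::finite \<Rightarrow> real"
  assumes "inj x" "\<forall>j. x j \<noteq> 0" "2 \<le> m" "m \<le> CARD('n) + 1"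
  shows "\<exists>v. (\<forall>i. 2 \<le> i \<and> i < m \<longrightarrow> (\<Sum>j\<in>UNIV. v j * x j ^ i) = 0)
           \<and> (\<Sum>j\<in>UNIV. v j * x j ^ m) \<noteq> 0"
proof -
  define w :: "nat \<Rightarrow> real^'n" where "w i = (\<chi> j. x j ^ i)" for i
  obtain y z where y: "y \<in> span (w ` {2..<m})"
      and z: "\<And>u. u \<in> span (w ` {2..<m}) \<Longrightarrow> orthogonal z u" and yz: "w m = y + z"
    using orthogonal_subspace_decomp_exists[of "w ` {2..<m}" "w m"] by metis
  have inner_w: "z \<bullet> w i = (\<Sum>j\<in>UNIV. z $ j * x j ^ i)" for i
    by (simp add: inner_vec_def w_def)
  have "z \<bullet> w i = 0" if "2 \<le> i" "i < m" for i
    using z[of "w i"] that span_base[of "w i"] unfolding orthogonal_def by auto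
  moreover have "z \<noteq> 0"
  proof
    assume "z = 0"
    then obtain c where "w m = (\<Sum>i\<in>{2..<m}. c i *\<^sub>R w i)"
      using y yz span_image_sum by fastforce
    hence "\<forall>j. x j ^ m = (\<Sum>i\<in>{2..<m}. c i * x j ^ i)"
      by (simp add: w_def vec_eq_iff)
    thus False using power_not_combination_of_lower_powers[OF assms] by blast
  qed
  moreover have "z \<bullet> w m = z \<bullet> z"
    using yz z[OF y] by (simp add: inner_add_right orthogonal_def inner_commute)
  ultimately show ?thesis
    by (intro exI[of _ "\<lambda>j. z $ j"]) (simp add: inner_w[symmetric])
qed

definition falling_fact :: "real \<Rightarrow> nat \<Rightarrow> real" where
  "falling_fact a m = (\<Prod>i<m. a - real i)"

lemma falling_fact_Suc: "falling_fact a (Suc m) = falling_fact a m * (a - real m)"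
  by (simp add: falling_fact_def)

lemma exists_falling_fact_neg:
  fixes \<alpha> :: real
  assumes "\<forall>m::nat. \<alpha> \<noteq> real m" "\<alpha> < real N" "2 \<le> N"
  shows "\<exists>m0. 2 \<le> m0 \<and> m0 \<le> N + 1 \<and> falling_fact \<alpha> m0 < 0"
proof (cases "\<alpha> < 0")
  case True
  have "falling_fact \<alpha> 3 = \<alpha> * (\<alpha> - 1) * (\<alpha> - 2)"
    by (simp add: falling_fact_def numeral_3_eq_3 lessThan_Suc)
  also have "\<dots> < 0" using True by (intro mult_pos_neg mult_neg_neg) auto
  finally show ?thesis using assms(3) by (intro exI[of _ 3]) auto
next
  case False
  hence a0: "0 < \<alpha>" using assms(1)[rule_format, of 0] by auto
  define k where "k = nat \<lceil>\<alpha>\<rceil>"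
  have kc: "real k = real_of_int \<lceil>\<alpha>\<rceil>" using a0 unfolding k_def by simp
  have "\<alpha> \<le> real k" using kc by simp
  moreover have "\<alpha> \<noteq> real k" using assms(1) by simp
  ultimately have ak: "\<alpha> < real k" by simp
  have ak1: "real k - 1 < \<alpha>" using kc ceiling_correct[of \<alpha>] by linarith
  have kN: "k \<le> N"
  proof -
    have "\<lceil>\<alpha>\<rceil> \<le> int N" using assms(2) by (simp add: ceiling_le_iff)
    thus ?thesis unfolding k_def using assms(2) by simp
  qed
  have "0 < falling_fact \<alpha> k" unfolding falling_fact_def
  proof (intro prod_pos ballI)
    fix i assume "i \<in> {..<k}"
    hence "i + 1 \<le> k" by simp
    hence "real (i + 1) \<le> real k" by (simp only: of_nat_le_iff)
    thus "0 < \<alpha> - real i" using ak1 by simp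
  qed
  hence "falling_fact \<alpha> (Suc k) < 0" unfolding falling_fact_Suc using ak by (simp add: mult_pos_neg)
  moreover have "1 \<le> k" using ak a0 by (cases k) auto
  ultimately show ?thesis using kN by (intro exI[of _ "Suc k"]) auto
qed


text \<open>The \<open>m\<close>-th derivatives in \<open>s\<close> of \<open>(1 + u s)\<^sup>a\<close> and of the remainder
  \<open>(1 + u s)\<^sup>a - 1 - a u s\<close>.\<close>

definition powr_deriv :: "real \<Rightarrow> nat \<Rightarrow> real \<Rightarrow> real \<Rightarrow> real" where
  "powr_deriv a m s u = falling_fact a m * u ^ m * (1 + u * s) powr (a - real m)"

definition powr_remainder_deriv :: "real \<Rightarrow> nat \<Rightarrow> real \<Rightarrow> real \<Rightarrow> real" where
  "powr_remainder_deriv a m s u =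
     powr_deriv a m s u - (if m = 0 then 1 + a * (u * s) else if m = 1 then a * u else 0)"

lemma has_real_derivative_powr_deriv:
  assumes "0 < 1 + u * s"
  shows "((\<lambda>s. powr_deriv a m s u) has_real_derivative powr_deriv a (Suc m) s u) (at s)"
proof -
  have "((\<lambda>s. powr_deriv a m s u) has_real_derivative
      falling_fact a m * u ^ m * ((a - real m) * (1 + u * s) powr (a - real m - 1) * u)) (at s)"
    unfolding powr_deriv_def by (intro DERIV_cmult has_real_derivative_affine_powr assms)
  moreover have "a - real m - 1 = a - real (Suc m)" by simp
  ultimately show ?thesis unfolding powr_deriv_def falling_fact_Suc by (simp add: mult_ac)
qed

lemma has_real_derivative_powr_remainder_deriv:
  assumes "0 < 1 + u * s"
  shows "((\<lambda>s. powr_remainder_deriv a m s u) has_real_derivative powr_remainder_deriv a (Suc m) s u)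
           (at s)"
proof -
  have "((\<lambda>s. if m = 0 then 1 + a * (u * s) else if m = 1 then a * u else 0) has_real_derivative
      (if Suc m = 0 then 1 + a * (u * s) else if Suc m = 1 then a * u else 0)) (at s)"
    by (cases m) (auto intro!: derivative_eq_intros)
  from DERIV_diff[OF has_real_derivative_powr_deriv[OF assms] this] show ?thesis
    unfolding powr_remainder_deriv_def .
qed

lemma quad_form_powr_remainder_deriv_at_0:
  "quad_form I (\<lambda>j k. powr_remainder_deriv a m 0 (x j * x k)) v
     = (if m < 2 then 0 else falling_fact a m * (\<Sum>j\<in>I. v j * x j ^ m)\<^sup>2)"
proof -
  have "powr_remainder_deriv a m 0 u = (if m < 2 then 0 else falling_fact a m * u ^ m)" for u
  proof -
    consider "m = 0" | "m = 1" | "2 \<le> m" by linarith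
    thus ?thesis
      by cases (simp_all add: powr_remainder_deriv_def powr_deriv_def falling_fact_def)
  qed
  thus ?thesis
    by (simp add: quad_form_cmult power_mult_distrib quad_form_rank_one[symmetric])
      (simp add: quad_form_def)
qed

lemma one_plus_scaled_pos:
  fixes s u :: real
  assumes "0 \<le> s" "s \<le> 1" "0 < 1 + u"
  shows "0 < 1 + s * u"
proof -
  have "1 + s * u = (1 - s) + s * (1 + u)" by (simp add: algebra_simps)
  moreover have "0 \<le> s * (1 + u)" using assms by simp
  moreover have "s = 0 \<or> 0 < s * (1 + u)" using assms by (cases "s = 0") auto
  ultimately show ?thesis using assms(2) by linarith
qed

text \<open>Choose \<open>m\<^sub>0 \<le> n + 1\<close> with \<open>(\<alpha>)\<^sub>m\<^sub>0 < 0\<close> and \<open>v\<close> orthogonal to \<open>x\<^sup>\<circ>\<^sup>2, \<dots>, x\<^sup>\<circ>\<^sup>(\<^sup>m\<^sup>0\<^sup>-\<^sup>1\<^sup>)\<close> but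
  not to \<open>x\<^sup>\<circ>\<^sup>m\<^sup>0\<close>; then the Taylor expansion in \<open>s\<close> of \<open>v\<^sup>T R\<^sub>s v\<close> starts with the negative term
  \<open>(\<alpha>)\<^sub>m\<^sub>0 (v\<^sup>T x\<^sup>\<circ>\<^sup>m\<^sup>0)\<^sup>2 s\<^sup>m\<^sup>0 / m\<^sub>0!\<close>.\<close>

lemma powr_remainder_matrix_not_psd_near_0:
  fixes x :: "'n::finite \<Rightarrow> real"
  assumes x: "inj x" "\<forall>j. x j \<noteq> 0" and pos: "\<forall>j k. 0 < 1 + x j * x k"
    and \<alpha>: "\<forall>m::nat. \<alpha> \<noteq> real m" "\<alpha> < real CARD('n)" and n: "2 \<le> CARD('n)"
  shows "\<exists>s. 0 < s \<and> s \<le> 1 \<and> \<not> psd_on UNIV (\<lambda>j k. powr_remainder \<alpha> (s * (x j * x k)))"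
proof -
  obtain m0 where m0: "2 \<le> m0" "m0 \<le> CARD('n) + 1" "falling_fact \<alpha> m0 < 0"
    using exists_falling_fact_neg[OF \<alpha> n] by blast
  obtain v where v: "\<forall>m. 2 \<le> m \<and> m < m0 \<longrightarrow> (\<Sum>j\<in>UNIV. v j * x j ^ m) = 0"
      "(\<Sum>j\<in>UNIV. v j * x j ^ m0) \<noteq> 0"
    using exists_vector_annihilating_lower_powers[OF x m0(1,2)] by blast
  define D where "D m s = quad_form UNIV (\<lambda>j k. powr_remainder_deriv \<alpha> m s (x j * x k)) v" for m s
  have D_deriv: "(D m has_real_derivative D (Suc m) s) (at s)" if "0 \<le> s" "s \<le> 1" for m s
    unfolding D_def quad_form_def
    using one_plus_scaled_pos[OF that pos[rule_format]]
    by (intro DERIV_sum DERIV_cmult DERIV_cmult_right has_real_derivative_powr_remainder_deriv)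
      (simp add: mult.commute)
  have D_low: "D m 0 = 0" if "m < m0" for m
    using v(1) that unfolding D_def quad_form_powr_remainder_deriv_at_0 by auto
  have "D m0 0 < 0"
    using m0 v(2) unfolding D_def quad_form_powr_remainder_deriv_at_0 by (simp add: mult_neg_pos)
  moreover have "isCont (D m0) 0" using D_deriv[of 0 m0] by (intro DERIV_isCont) auto
  ultimately obtain r where r: "0 < r" "\<forall>t. t \<noteq> 0 \<and> \<bar>0 - t\<bar> < r \<longrightarrow> D m0 t < 0"
    using LIM_fun_less_zero unfolding isCont_def by blast
  define h where "h = min 1 (r / 2)"
  have h: "0 < h" "h \<le> 1" "h < r" using r unfolding h_def by auto
  obtain t where t: "0 < t" "t < h"
      "D 0 h = (\<Sum>m<m0. D m 0 / fact m * h ^ m) + D m0 t / fact m0 * h ^ m0"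
    using Maclaurin[OF h(1), of m0 D] m0(1) D_deriv h(2) by fastforce
  have "D 0 h < 0"
    using t r h D_low by (simp add: divide_neg_pos mult_neg_pos)
  moreover have "D 0 h = quad_form UNIV (\<lambda>j k. powr_remainder \<alpha> (h * (x j * x k))) v"
    unfolding D_def powr_remainder_deriv_def powr_deriv_def powr_remainder_def
    by (simp add: falling_fact_def algebra_simps)
  ultimately show ?thesis using h unfolding psd_on_def by (intro exI[of _ h]) (auto simp: not_le)
qed

lemma quad_form_scale_vec_sphere:
  fixes u :: "'n::finite \<Rightarrow> real"
  defines "w \<equiv> (\<chi> j. u j) /\<^sub>R norm (\<chi> j. u j)"
  shows "quad_form UNIV M (\<lambda>j. w $ j) = (1 / norm (\<chi> j. u j))\<^sup>2 * quad_form UNIV M u"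
proof -
  have "(\<lambda>j. w $ j) = (\<lambda>j. (1 / norm (\<chi> j. u j)) * u j)"
    unfolding w_def by (simp add: fun_eq_iff divide_inverse)
  thus ?thesis by (simp only: quad_form_scale_vector)
qed

lemma psd_on_iff_sphere:
  fixes M :: "'n::finite \<Rightarrow> 'n \<Rightarrow> real"
  shows "psd_on UNIV M \<longleftrightarrow> (\<forall>w\<in>sphere (0::real^'n) 1. 0 \<le> quad_form UNIV M (\<lambda>j. w $ j))"
proof
  assume sphere: "\<forall>w\<in>sphere (0::real^'n) 1. 0 \<le> quad_form UNIV M (\<lambda>j. w $ j)"
  show "psd_on UNIV M" unfolding psd_on_def
  proof
    fix u :: "'n \<Rightarrow> real"
    show "0 \<le> quad_form UNIV M u"
    proof (cases "(\<chi> j. u j) = 0")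
      case True
      hence "u = (\<lambda>_. 0)" by (simp add: vec_eq_iff fun_eq_iff)
      thus ?thesis by (simp add: quad_form_def)
    next
      case False
      hence "(\<chi> j. u j) /\<^sub>R norm (\<chi> j. u j) \<in> sphere 0 1" by simp
      with sphere have "0 \<le> (1 / norm (\<chi> j. u j))\<^sup>2 * quad_form UNIV M u"
        unfolding quad_form_scale_vec_sphere[symmetric] by blast
      thus ?thesis using False by (simp add: zero_le_mult_iff)
    qed
  qed
qed (simp add: psd_on_def)

lemma abs_quad_form_diff_le:
  fixes w :: "real^'n::finite"
  assumes "norm w = 1"
  shows "\<bar>quad_form UNIV A (\<lambda>j. w $ j) - quad_form UNIV B (\<lambda>j. w $ j)\<bar>
           \<le> (\<Sum>j\<in>UNIV. \<Sum>k\<in>UNIV. \<bar>A j k - B j k\<bar>)"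
proof -
  have w: "\<bar>w $ j\<bar> * \<bar>w $ k\<bar> \<le> 1" for j k
    using component_le_norm_cart[of w] assms by (intro mult_le_one) auto
  have "\<bar>quad_form UNIV A (\<lambda>j. w $ j) - quad_form UNIV B (\<lambda>j. w $ j)\<bar>
      = \<bar>\<Sum>j\<in>UNIV. \<Sum>k\<in>UNIV. w $ j * (A j k - B j k) * w $ k\<bar>"
    unfolding quad_form_diff[symmetric] by (simp add: quad_form_def)
  also have "\<dots> \<le> (\<Sum>j\<in>UNIV. \<Sum>k\<in>UNIV. \<bar>w $ j * (A j k - B j k) * w $ k\<bar>)"
    by (intro order.trans[OF sum_abs] sum_mono sum_abs)
  also have "\<dots> \<le> (\<Sum>j\<in>UNIV. \<Sum>k\<in>UNIV. \<bar>A j k - B j k\<bar>)"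
    using mult_left_mono[OF w, of "\<bar>A _ _ - B _ _\<bar>"]
    by (intro sum_mono) (simp add: abs_mult mult_ac)
  finally show ?thesis .
qed

lemma quad_form_attains_min_on_sphere:
  fixes A :: "'n::finite \<Rightarrow> 'n \<Rightarrow> real"
  shows "\<exists>w0\<in>sphere (0::real^'n) 1.
           Inf ((\<lambda>w. quad_form UNIV A (\<lambda>j. w $ j)) ` sphere 0 1) = quad_form UNIV A (\<lambda>j. w0 $ j)
           \<and> (\<forall>w\<in>sphere 0 1. quad_form UNIV A (\<lambda>j. w0 $ j) \<le> quad_form UNIV A (\<lambda>j. w $ j))"
proof -
  have "continuous_on (sphere 0 1) (\<lambda>w::real^'n. quad_form UNIV A (\<lambda>j. w $ j))"
    unfolding quad_form_def by (intro continuous_intros)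
  from continuous_attains_inf[OF compact_sphere _ this] obtain w0 where
    "w0 \<in> sphere (0::real^'n) 1"
    "\<forall>w\<in>sphere 0 1. quad_form UNIV A (\<lambda>j. w0 $ j) \<le> quad_form UNIV A (\<lambda>j. w $ j)"
    by auto
  thus ?thesis by (intro bexI[of _ w0] conjI cInf_eq_minimum) auto
qed

text \<open>The least eigenvalue, here the minimum of the quadratic form on the unit sphere, depends
  continuously on the entries; it changes sign along the path, so it vanishes somewhere.\<close>

lemma psd_on_path_crossing:
  fixes H :: "real \<Rightarrow> 'n::finite \<Rightarrow> 'n \<Rightarrow> real"
  assumes "a \<le> b" and cont: "\<And>j k. continuous_on {a..b} (\<lambda>s. H s j k)"
    and "\<not> psd_on UNIV (H a)" "psd_on UNIV (H b)"
  shows "\<exists>s\<in>{a..b}. psd_on UNIV (H s) \<and> (\<exists>w. w \<noteq> (\<lambda>_. 0) \<and> quad_form UNIV (H s) w = 0)"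
proof -
  define S where "S = sphere (0::real^'n) 1"
  define F where "F s w = quad_form UNIV (H s) (\<lambda>j. w $ j)" for s w
  define \<mu> where "\<mu> s = Inf (F s ` S)" for s
  have min: "\<exists>w0\<in>S. \<mu> s = F s w0 \<and> (\<forall>w\<in>S. F s w0 \<le> F s w)" for s
    using quad_form_attains_min_on_sphere[of "H s"] unfolding \<mu>_def F_def S_def by blast
  have psd_iff: "psd_on UNIV (H s) \<longleftrightarrow> 0 \<le> \<mu> s" for s
    using min[of s] unfolding psd_on_iff_sphere F_def[symmetric] S_def[symmetric]
    by (metis order.trans)
  define E where "E s s' = (\<Sum>j\<in>UNIV. \<Sum>k\<in>UNIV. \<bar>H s j k - H s' j k\<bar>)" for s s'
  have \<mu>_diff: "\<bar>\<mu> s - \<mu> s'\<bar> \<le> E s s'" for s s'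
  proof -
    have F_diff: "\<bar>F s w - F s' w\<bar> \<le> E s s'" if "w \<in> S" for w
      using abs_quad_form_diff_le[of w "H s" "H s'"] that unfolding F_def E_def S_def by simp
    obtain w0 where w0: "w0 \<in> S" "\<mu> s = F s w0" "\<forall>w\<in>S. F s w0 \<le> F s w" using min by blast
    obtain w1 where w1: "w1 \<in> S" "\<mu> s' = F s' w1" "\<forall>w\<in>S. F s' w1 \<le> F s' w" using min by blast
    show ?thesis
      using w0 w1 F_diff[OF w0(1)] F_diff[OF w1(1)] by (smt (verit, best))
  qed
  have "continuous_on {a..b} \<mu>"
    unfolding continuous_on_def
  proof
    fix s assume s: "s \<in> {a..b}"
    have "continuous_on {a..b} (\<lambda>s'. E s' s)"
      unfolding E_def by (intro continuous_intros cont)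
    hence "((\<lambda>s'. E s' s) \<longlongrightarrow> 0) (at s within {a..b})"
      using s unfolding continuous_on_def E_def by fastforce
    hence "((\<lambda>s'. \<mu> s' - \<mu> s) \<longlongrightarrow> 0) (at s within {a..b})"
      by (rule Lim_null_comparison[OF always_eventually, rotated]) (simp add: \<mu>_diff)
    thus "(\<mu> \<longlongrightarrow> \<mu> s) (at s within {a..b})" by (rule LIM_zero_cancel)
  qed
  moreover have "\<mu> a < 0" "0 \<le> \<mu> b" using assms(3,4) psd_iff by auto
  ultimately obtain s where s: "a \<le> s" "s \<le> b" "\<mu> s = 0"
    using IVT'[of \<mu> a 0 b] assms(1) by auto
  obtain w0 where w0: "w0 \<in> S" "\<mu> s = F s w0" using min by blast
  have "w0 \<noteq> 0" using w0(1) unfolding S_def by auto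
  hence "(\<lambda>j. w0 $ j) \<noteq> (\<lambda>_. 0)" by (auto simp: vec_eq_iff fun_eq_iff)
  thus ?thesis using s w0 psd_iff unfolding F_def by (intro bexI[of _ s]) auto
qed

subsection \<open>Necessity of the condition on \<open>\<alpha>\<close>\<close>

lemma powr_remainder_matrix_not_psd:
  fixes x :: "'n::finite \<Rightarrow> real"
  assumes x: "inj x" "\<forall>j. x j \<noteq> 0" and pos: "\<forall>j k. 0 < 1 + x j * x k"
    and \<alpha>: "\<forall>m::nat. \<alpha> \<noteq> real m" "\<alpha> < real CARD('n)" and n: "2 \<le> CARD('n)"
  shows "\<not> psd_on UNIV (\<lambda>j k. powr_remainder \<alpha> (x j * x k))"
proof
  define H where "H s j k = powr_remainder \<alpha> (s * (x j * x k))" for s j k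
  assume "psd_on UNIV (\<lambda>j k. powr_remainder \<alpha> (x j * x k))"
  hence "psd_on UNIV (H 1)" unfolding H_def by simp
  obtain \<sigma> where \<sigma>: "0 < \<sigma>" "\<sigma> \<le> 1" "\<not> psd_on UNIV (H \<sigma>)"
    using powr_remainder_matrix_not_psd_near_0[OF x pos \<alpha> n] unfolding H_def by blast
  have pos_s: "0 < 1 + s * (x j * x k)" if "\<sigma> \<le> s" "s \<le> 1" for s j k
    using one_plus_scaled_pos[OF _ that(2) pos[rule_format]] that \<sigma>(1) by simp
  have "continuous_on {\<sigma>..1} (\<lambda>s. H s j k)" for j k
    unfolding H_def powr_remainder_def
    by (intro continuous_intros) (use pos_s in \<open>auto simp: less_imp_neq[symmetric]\<close>)
  from psd_on_path_crossing[OF \<sigma>(2) this \<sigma>(3) \<open>psd_on UNIV (H 1)\<close>] obtain s w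
    where s: "\<sigma> \<le> s" "s \<le> 1" "psd_on UNIV (H s)" and w: "w \<noteq> (\<lambda>_. 0)" "quad_form UNIV (H s) w = 0"
    by (auto simp only: atLeastAtMost_iff)
  have "symmetric_on UNIV (H s)" unfolding symmetric_on_def H_def by (simp add: mult.commute)
  with s(3) w(2) have "(\<Sum>k\<in>UNIV. H s j k * w k) = 0" for j
    by (intro psd_on_kernel) auto
  hence kernel: "\<forall>j. (\<Sum>k\<in>UNIV. w k * powr_remainder \<alpha> (s * x k * x j)) = 0"
    unfolding H_def by (simp add: mult_ac)
  have "\<forall>k. w k = 0"
  proof (rule powr_remainder_matrix_nonsingular[where y = "\<lambda>k. s * x k" and z = x, OF _ _ x _ \<alpha>(1) kernel])
    show "inj (\<lambda>k. s * x k)" using x(1) s \<sigma>(1) by (simp add: inj_def)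
    show "\<forall>k. s * x k \<noteq> 0" using x(2) s \<sigma>(1) by simp
    show "\<forall>j k. 0 < 1 + s * x k * x j"
      using pos_s[OF s(1,2)] by (simp add: mult.assoc)
  qed
  thus False using w(1) by auto
qed

text \<open>\<open>convexity_gap \<alpha> t (x\<^sub>j x\<^sub>k)\<close> is the \<open>(j, k)\<close> entry of
  \<open>t A\<^sup>\<circ>\<^sup>\<alpha> + (1 - t) B\<^sup>\<circ>\<^sup>\<alpha> - (t A + (1 - t) B)\<^sup>\<circ>\<^sup>\<alpha>\<close>.\<close>

definition convexity_gap :: "real \<Rightarrow> real \<Rightarrow> real \<Rightarrow> real" where
  "convexity_gap \<alpha> t u = t * (1 + u) powr \<alpha> + (1 - t) - (1 + t * u) powr \<alpha>"

lemma quad_form_convexity_gap: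
  fixes I :: "'a set" and U :: "'a \<Rightarrow> 'a \<Rightarrow> real" and v :: "'a \<Rightarrow> real" and \<alpha> t :: real
  defines "q \<equiv> \<lambda>s. quad_form I (\<lambda>j k. (1 + U j k * s) powr \<alpha>) v"
  shows "quad_form I (\<lambda>j k. convexity_gap \<alpha> t (U j k)) v = t * q 1 + (1 - t) * q 0 - q t"
proof -
  have "quad_form I (\<lambda>j k. convexity_gap \<alpha> t (U j k)) v
      = quad_form I (\<lambda>j k. t * (1 + U j k * 1) powr \<alpha> + (1 - t) * (1 + U j k * 0) powr \<alpha>) v
        - q t"
    unfolding q_def convexity_gap_def by (subst quad_form_diff[symmetric]) (simp add: mult_ac)
  thus ?thesis unfolding q_def quad_form_add quad_form_cmult .
qed

lemma convexity_gap_not_psd_near_0: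
  assumes pos: "\<forall>j k. 0 < 1 + U j k"
    and not_psd: "\<not> psd_on I (\<lambda>j k. powr_remainder \<alpha> (U j k))"
  shows "\<exists>t. 0 < t \<and> t \<le> 1 \<and> \<not> psd_on I (\<lambda>j k. convexity_gap \<alpha> t (U j k))"
proof -
  obtain v where v: "quad_form I (\<lambda>j k. powr_remainder \<alpha> (U j k)) v < 0"
    using not_psd unfolding psd_on_def by (auto simp: not_le)
  define q where "q s = quad_form I (\<lambda>j k. (1 + U j k * s) powr \<alpha>) v" for s
  define L where "L = quad_form I (\<lambda>j k. \<alpha> * U j k) v"
  have "(q has_real_derivative L) (at 0)"
    using has_real_derivative_quad_form_powr[of I "\<lambda>_ _. 1" U 0 \<alpha> v] pos
    unfolding q_def L_def by (simp add: mult.commute)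
  moreover have "quad_form I (\<lambda>j k. powr_remainder \<alpha> (U j k)) v = q 1 - q 0 - L"
    unfolding powr_remainder_def quad_form_diff q_def L_def by simp
  hence "q 1 - q 0 < L" using v by simp
  ultimately have "eventually (\<lambda>s. q 1 - q 0 < (q s - q 0) / (s - 0)) (at_right 0)"
    unfolding has_field_derivative_iff by (auto dest: order_tendstoD(1) simp: eventually_at_split)
  then obtain b where b: "0 < b" "\<forall>s>0. s < b \<longrightarrow> q 1 - q 0 < (q s - q 0) / s"
    unfolding eventually_at_right_field by auto
  define t where "t = min (b / 2) 1"
  have t: "0 < t" "t \<le> 1" "t < b" using b unfolding t_def by auto
  have "quad_form I (\<lambda>j k. convexity_gap \<alpha> t (U j k)) v = t * ((q 1 - q 0) - (q t - q 0) / t)"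
    unfolding quad_form_convexity_gap q_def[symmetric] using t by (simp add: field_simps)
  also have "\<dots> < 0" using b t by (simp add: mult_pos_neg)
  finally show ?thesis using t unfolding psd_on_def by (auto simp: not_le)
qed

subsection \<open>Sufficiency of the condition on \<open>\<alpha>\<close>\<close>

lemma convexity_gap_nat_eq:
  fixes u t :: real and m :: nat
  assumes "0 < 1 + u" "0 \<le> t" "t \<le> 1"
  shows "convexity_gap (real m) t u
       = (\<Sum>i\<le>m. (real (m choose i) * (t - t ^ i) + (if i = 0 then 1 - t else 0)) * u ^ i)"
proof -
  have "0 < 1 + t * u" using one_plus_scaled_pos[OF assms(2,3,1)] .
  hence "convexity_gap (real m) t u = t * (1 + u) ^ m + (1 - t) - (1 + t * u) ^ m"
    using assms(1) by (simp add: convexity_gap_def powr_realpow)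
  also have "\<dots> = (\<Sum>i\<le>m. real (m choose i) * (t - t ^ i) * u ^ i) + (1 - t)"
    unfolding binomial_ring[of u 1 m, simplified add.commute] binomial_ring[of "t * u" 1 m, simplified add.commute]
    by (simp add: sum_distrib_left power_mult_distrib algebra_simps flip: sum_subtractf)
  also have "\<dots> = (\<Sum>i\<le>m. (real (m choose i) * (t - t ^ i) + (if i = 0 then 1 - t else 0)) * u ^ i)"
    by (simp add: distrib_right sum.distrib if_distrib[of "\<lambda>a. a * _"] sum.delta cong: if_cong)
  finally show ?thesis .
qed

lemma psd_on_convexity_gap_nat:
  assumes "finite I" "\<forall>j k. 0 < 1 + x j * x k" "0 \<le> t" "t \<le> 1"
  shows "psd_on I (\<lambda>j k. convexity_gap (real m) t (x j * x k))"
proof -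
  define c where "c i = real (m choose i) * (t - t ^ i) + (if i = 0 then 1 - t else 0)" for i
  have "0 \<le> c i" for i
  proof (cases "i = 0")
    case False
    hence "t ^ i \<le> t ^ 1" using assms(3,4) by (intro power_decreasing) auto
    thus ?thesis using False by (simp add: c_def)
  qed (simp add: c_def)
  hence "psd_on I (\<lambda>j k. \<Sum>i\<le>m. c i * (x j ^ i * x k ^ i))"
    unfolding psd_on_def quad_form_sum[OF finite_atMost] quad_form_cmult quad_form_rank_one
    by (auto intro: sum_nonneg)
  moreover have "convexity_gap (real m) t (x j * x k) = (\<Sum>i\<le>m. c i * (x j ^ i * x k ^ i))" for j k
    unfolding c_def using convexity_gap_nat_eq[OF assms(2)[rule_format] assms(3,4)]
    by (simp add: power_mult_distrib)
  ultimately show ?thesis by simp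
qed

text \<open>For \<open>\<alpha> \<ge> n\<close> the function \<open>s \<mapsto> v\<^sup>T (1 + s x x\<^sup>T)\<^sup>\<circ>\<^sup>\<alpha> v\<close> is convex on \<open>[0, 1]\<close>: its second
  derivative is \<open>\<alpha> (\<alpha> - 1)\<close> times the quadratic form of \<open>(1 + s x x\<^sup>T)\<^sup>\<circ>\<^sup>(\<^sup>\<alpha>\<^sup>-\<^sup>2\<^sup>)\<close>, positive
  semidefinite by the FitzGerald--Horn theorem, at the vector \<open>v \<circ> x\<^sup>\<circ>\<^sup>2\<close>.\<close>

lemma convex_on_quad_form_powr:
  assumes "finite I" "\<forall>j k. 0 < 1 + x j * x k" "real (card I) \<le> \<alpha>" "1 \<le> \<alpha>"
  shows "convex_on {0..1} (\<lambda>s. quad_form I (\<lambda>j k. (1 + x j * x k * s) powr \<alpha>) v)"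
proof -
  have pos: "0 < 1 + x j * x k * s" if "0 \<le> s" "s \<le> 1" for j k s
    using one_plus_scaled_pos[OF that assms(2)[rule_format, of j k]] by (simp add: mult.commute)
  define \<phi> where "\<phi> s = quad_form I (\<lambda>j k. (1 + x j * x k * s) powr \<alpha>) v" for s
  define \<phi>' where
    "\<phi>' s = quad_form I (\<lambda>j k. \<alpha> * (1 + x j * x k * s) powr (\<alpha> - 1) * (x j * x k)) v" for s
  define \<phi>'' where "\<phi>'' s = quad_form I (\<lambda>j k. \<alpha> * ((\<alpha> - 1) * (1 + x j * x k * s) powr (\<alpha> - 1 - 1)
      * (x j * x k)) * (x j * x k)) v" for s
  have d1: "(\<phi> has_real_derivative \<phi>' s) (at s)" if "0 \<le> s" "s \<le> 1" for s
    unfolding \<phi>_def \<phi>'_def quad_form_def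
    by (intro DERIV_sum DERIV_cmult DERIV_cmult_right has_real_derivative_affine_powr pos that)
  have d2: "(\<phi>' has_real_derivative \<phi>'' s) (at s)" if "0 \<le> s" "s \<le> 1" for s
    unfolding \<phi>'_def \<phi>''_def quad_form_def
    by (intro DERIV_sum DERIV_cmult DERIV_cmult_right has_real_derivative_affine_powr pos that)
  have "0 \<le> \<phi>'' s" if "0 \<le> s" "s \<le> 1" for s
  proof -
    have "psd_on I (\<lambda>j k. 1 * 1 + s * (x j * x k))"
      using that by (intro psd_on_add psd_on_cmult psd_on_rank_one)
    hence "psd_on I (\<lambda>j k. (1 + x j * x k * s) powr (\<alpha> - 2))"
      using assms(1,3) pos[OF that]
      by (intro psd_on_entrywise_powr) (auto simp: mult_ac symmetric_on_def)
    hence "0 \<le> quad_form I (\<lambda>j k. (1 + x j * x k * s) powr (\<alpha> - 2) * (x j ^ 2 * x k ^ 2)) v"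
      unfolding psd_on_def quad_form_hadamard_rank_one by blast
    moreover have "\<phi>'' s
        = \<alpha> * (\<alpha> - 1) * quad_form I (\<lambda>j k. (1 + x j * x k * s) powr (\<alpha> - 2) * (x j ^ 2 * x k ^ 2)) v"
      unfolding \<phi>''_def quad_form_cmult[symmetric] by (simp add: power2_eq_square mult_ac)
    ultimately show ?thesis using assms(4) by simp
  qed
  hence "\<phi>' a \<le> \<phi>' b" if "0 \<le> a" "a \<le> b" "b \<le> 1" for a b
    using that d2 by (intro DERIV_nonneg_imp_nondecreasing[of a b \<phi>']) (meson order_trans)+
  thus ?thesis
    using d1 unfolding \<phi>_def[symmetric] by (intro convex_on_realI[where f' = \<phi>']) auto
qed

lemma psd_on_convexity_gap_large:
  assumes "finite I" "\<forall>j k. 0 < 1 + x j * x k" "real (card I) \<le> \<alpha>" "0 \<le> t" "t \<le> 1"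
  shows "psd_on I (\<lambda>j k. convexity_gap \<alpha> t (x j * x k))"
proof (cases "I = {}")
  case True
  then show ?thesis by (simp add: psd_on_def quad_form_def)
next
  case False
  hence "1 \<le> card I" using assms(1) by (simp add: Suc_le_eq card_gt_0_iff)
  show ?thesis unfolding psd_on_def
  proof
    fix v
    have "convex_on {0..1} (\<lambda>s. quad_form I (\<lambda>j k. (1 + x j * x k * s) powr \<alpha>) v)"
      using assms(1-3) \<open>1 \<le> card I\<close> by (intro convex_on_quad_form_powr) auto
    from convex_onD[OF this, of t 0 1] assms(4,5)
    show "0 \<le> quad_form I (\<lambda>j k. convexity_gap \<alpha> t (x j * x k)) v"
      unfolding quad_form_convexity_gap by simp
  qed
qed

lemma inner_mult_vec_eq_quad_form: "v \<bullet> (P *v v) = quad_form UNIV (\<lambda>j k. P $ j $ k) (\<lambda>j. v $ j)"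
  unfolding inner_vec_def matrix_vector_mult_def quad_form_def
  by (simp add: sum_distrib_left mult_ac)

lemma psd_iff_psd_on: "psd P \<longleftrightarrow> psd_on UNIV (\<lambda>j k. P $ j $ k)"
  unfolding psd_def psd_on_def inner_mult_vec_eq_quad_form
proof (intro iffI allI)
  fix w :: "'a \<Rightarrow> real"
  assume "\<forall>v. 0 \<le> quad_form UNIV (\<lambda>j k. P $ j $ k) (\<lambda>j. v $ j)"
  moreover have "(\<lambda>j. (\<chi> j. w j) $ j) = w" by simp
  ultimately show "0 \<le> quad_form UNIV (\<lambda>j k. P $ j $ k) w" by metis
qed simp

lemma loewner_le_iff_psd_on_convexity_gap:
  fixes x :: "real^'n"
  defines "A \<equiv> (\<chi> j k. 1 + x $ j * x $ k) :: real^'n^'n" and "B \<equiv> (\<chi> j k. 1) :: real^'n^'n"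
  shows "loewner_le (entrywise_powr (t *\<^sub>R A + (1 - t) *\<^sub>R B) \<alpha>)
           (t *\<^sub>R entrywise_powr A \<alpha> + (1 - t) *\<^sub>R entrywise_powr B \<alpha>)
         \<longleftrightarrow> psd_on UNIV (\<lambda>j k. convexity_gap \<alpha> t (x $ j * x $ k))"
proof -
  have "t *\<^sub>R entrywise_powr A \<alpha> + (1 - t) *\<^sub>R entrywise_powr B \<alpha>
          - entrywise_powr (t *\<^sub>R A + (1 - t) *\<^sub>R B) \<alpha> = (\<chi> j k. convexity_gap \<alpha> t (x $ j * x $ k))"
    unfolding A_def B_def by (simp add: vec_eq_iff entrywise_powr_def convexity_gap_def algebra_simps)
  moreover have "(\<lambda>j k. (\<chi> j k. convexity_gap \<alpha> t (x $ j * x $ k)) $ j $ k)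
      = (\<lambda>j k. convexity_gap \<alpha> t (x $ j * x $ k))" by simp
  ultimately show ?thesis unfolding loewner_le_def psd_iff_psd_on by metis
qed

theorem mainTheorem12:
  fixes x :: "real^'n" and \<alpha> :: real
  assumes "CARD('n) \<ge> 2"
    and "inj (\<lambda>j. x $ j)"
    and "\<forall>j. x $ j \<noteq> 0"
    and "\<forall>j k. 1 + x $ j * x $ k > 0"
  shows "(\<forall>t::real. 0 \<le> t \<and> t \<le> 1 \<longrightarrow>
            (let A = (\<chi> j k. 1 + x $ j * x $ k) :: real^'n^'n;
                 B = (\<chi> j k. 1) :: real^'n^'n
             in loewner_le (entrywise_powr (t *\<^sub>R A + (1 - t) *\<^sub>R B) \<alpha>)
                           (t *\<^sub>R entrywise_powr A \<alpha> + (1 - t) *\<^sub>R entrywise_powr B \<alpha>)))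
         \<longleftrightarrow> ((\<exists>k::nat. \<alpha> = real k) \<or> \<alpha> \<ge> real CARD('n))"
proof -
  have pos: "\<forall>j k. 0 < 1 + x $ j * x $ k" using assms(4) by simp
  show ?thesis
    unfolding Let_def loewner_le_iff_psd_on_convexity_gap
  proof (intro iffI allI impI)
    assume psd: "\<forall>t. 0 \<le> t \<and> t \<le> 1 \<longrightarrow> psd_on UNIV (\<lambda>j k. convexity_gap \<alpha> t (x $ j * x $ k))"
    show "(\<exists>k::nat. \<alpha> = real k) \<or> real CARD('n) \<le> \<alpha>"
    proof (rule ccontr)
      assume "\<not> ?thesis"
      hence "\<not> psd_on UNIV (\<lambda>j k. powr_remainder \<alpha> (x $ j * x $ k))"
        using powr_remainder_matrix_not_psd[of "\<lambda>j. x $ j"] assms by (auto simp: not_le)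
      then obtain t where "0 < t" "t \<le> 1"
          "\<not> psd_on UNIV (\<lambda>j k. convexity_gap \<alpha> t (x $ j * x $ k))"
        using convexity_gap_not_psd_near_0[of "\<lambda>j k. x $ j * x $ k"] pos by blast
      thus False using psd by auto
    qed
  next
    fix t :: real assume "(\<exists>k::nat. \<alpha> = real k) \<or> real CARD('n) \<le> \<alpha>" "0 \<le> t \<and> t \<le> 1"
    thus "psd_on UNIV (\<lambda>j k. convexity_gap \<alpha> t (x $ j * x $ k))"
      using psd_on_convexity_gap_nat[of UNIV "\<lambda>j. x $ j"] psd_on_convexity_gap_large[of UNIV "\<lambda>j. x $ j"]
        pos by auto
  qed
qed

end
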